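(* Let $G$ be an amenable locally compact group with left Haar measure $m$. If $(A_i)_{i\in\mathbb I}$ is a Følner net and $L\subseteq G$ is a compact symmetric unit neighborhood, then $(LA_i)_{i\in\mathbb I}$ is a strong Følner net.
   Context: $\mathcal K$: nonempty compact subsets of $G$; $\mathcal K_p$: those of positive Haar measure. Nets are indexed by a directed partially ordered set $(\mathbb I,\prec)$. For $K,A\subseteq G$: Følner boundary $\delta^KA=KA\,\triangle\, A$; strong Følner boundary $\partial_K A=K^{-1}A\cap K^{-1}(G\setminus A)$. A Følner net is a net $(A_i)$ in $\mathcal K_p$ with $\lim_i m(\delta^KA_i)/m(A_i)=0$ for every $K\in\mathcal K$; a strong Følner net is a net $(A_i)$ in $\mathcal K_p$ with $\lim_i m(\partial_KA_i)/m(A_i)=0$ for every $K\in\mathcal K$. $G$ is amenable if it admits a left-invariant mean on $L^\infty(G)$. *)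

theory Defs
  imports "HOL-Analysis.Analysis"
begin

text \<open>The group G is a type 'g carrying a (not necessarily commutative) group structure
  written additively (class group_add: + is the group product, 0 the unit, uminus the
  inverse) together with a Hausdorff topology making the operations continuous
  (class topological_group_add).\<close>

definition set_prod :: "'g::group_add set \<Rightarrow> 'g set \<Rightarrow> 'g set" where
  "set_prod K A = {k + a | k a. k \<in> K \<and> a \<in> A}"

definition set_inv :: "'g::group_add set \<Rightarrow> 'g set" where
  "set_inv K = uminus ` K"

definition folner_boundary :: "'g::group_add set \<Rightarrow> 'g set \<Rightarrow> 'g set" where
  "folner_boundary K A = (set_prod K A - A) \<union> (A - set_prod K A)"

definition strong_folner_boundary :: "'g::group_add set \<Rightarrow> 'g set \<Rightarrow> 'g set" where
  "strong_folner_boundary K A = set_prod (set_inv K) A \<inter> set_prod (set_inv K) (UNIV - A)"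

definition left_haar_measure :: "'g::topological_group_add measure \<Rightarrow> bool" where
  "left_haar_measure m \<longleftrightarrow>
     sets m = sets borel \<and>
     (\<forall>A \<in> sets borel. \<forall>x. emeasure m ((+) x ` A) = emeasure m A) \<and>
     (\<forall>K. compact K \<longrightarrow> emeasure m K < \<infinity>) \<and>
     (\<forall>U. open U \<and> U \<noteq> {} \<longrightarrow> emeasure m U > 0) \<and>
     (\<forall>A \<in> sets borel. emeasure m A = (INF U \<in> {U. open U \<and> A \<subseteq> U}. emeasure m U)) \<and>
     (\<forall>U. open U \<longrightarrow> emeasure m U = (SUP K \<in> {K. compact K \<and> K \<subseteq> U}. emeasure m K))"

text \<open>Essentially bounded measurable real functions (representatives of L^infinity(G)).\<close>
definition Linf :: "'g::topological_group_add measure \<Rightarrow> ('g \<Rightarrow> real) set" where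
  "Linf m = {f. f \<in> borel_measurable m \<and> (\<exists>C. AE x in m. \<bar>f x\<bar> \<le> C)}"

definition left_invariant_mean :: "'g::topological_group_add measure \<Rightarrow> (('g \<Rightarrow> real) \<Rightarrow> real) \<Rightarrow> bool" where
  "left_invariant_mean m \<phi> \<longleftrightarrow>
     (\<forall>f\<in>Linf m. \<forall>g\<in>Linf m. \<forall>a b. \<phi> (\<lambda>x. a * f x + b * g x) = a * \<phi> f + b * \<phi> g) \<and>
     (\<forall>f\<in>Linf m. \<forall>g\<in>Linf m. (AE x in m. f x = g x) \<longrightarrow> \<phi> f = \<phi> g) \<and>
     (\<forall>f\<in>Linf m. (AE x in m. 0 \<le> f x) \<longrightarrow> 0 \<le> \<phi> f) \<and>
     \<phi> (\<lambda>_. 1) = 1 \<and>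
     (\<forall>f\<in>Linf m. \<forall>x. \<phi> (\<lambda>y. f (- x + y)) = \<phi> f)"

definition amenable :: "'g::topological_group_add measure \<Rightarrow> bool" where
  "amenable m \<longleftrightarrow> (\<exists>\<phi>. left_invariant_mean m \<phi>)"

text \<open>Directed partially ordered index set (I, prec), I being the whole type 'i,
  and the associated filter of tails along which nets converge.\<close>
definition directed_poset :: "('i \<Rightarrow> 'i \<Rightarrow> bool) \<Rightarrow> bool" where
  "directed_poset le \<longleftrightarrow>
     (\<forall>i. le i i) \<and> (\<forall>i j k. le i j \<longrightarrow> le j k \<longrightarrow> le i k) \<and>
     (\<forall>i j. le i j \<longrightarrow> le j i \<longrightarrow> i = j) \<and> (\<forall>i j. \<exists>k. le i k \<and> le j k)"

definition net_filter :: "('i \<Rightarrow> 'i \<Rightarrow> bool) \<Rightarrow> 'i filter" where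
  "net_filter le = (INF i. principal {j. le i j})"

definition cK :: "'g::topological_space set set" where
  "cK = {K. compact K \<and> K \<noteq> {}}"

definition cKp :: "'g::topological_group_add measure \<Rightarrow> 'g set set" where
  "cKp m = {K. compact K \<and> emeasure m K > 0}"

definition folner_net :: "'g::topological_group_add measure \<Rightarrow> ('i \<Rightarrow> 'i \<Rightarrow> bool) \<Rightarrow> ('i \<Rightarrow> 'g set) \<Rightarrow> bool" where
  "folner_net m le A \<longleftrightarrow> (\<forall>i. A i \<in> cKp m) \<and>
     (\<forall>K\<in>cK. ((\<lambda>i. measure m (folner_boundary K (A i)) / measure m (A i)) \<longlongrightarrow> 0) (net_filter le))"

definition strong_folner_net :: "'g::topological_group_add measure \<Rightarrow> ('i \<Rightarrow> 'i \<Rightarrow> bool) \<Rightarrow> ('i \<Rightarrow> 'g set) \<Rightarrow> bool" where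
  "strong_folner_net m le A \<longleftrightarrow> (\<forall>i. A i \<in> cKp m) \<and>
     (\<forall>K\<in>cK. ((\<lambda>i. measure m (strong_folner_boundary K (A i)) / measure m (A i)) \<longlongrightarrow> 0) (net_filter le))"

end

theory Submission
  imports Defs
begin

text \<open>In multiplicative notation: since 0 is interior to L, a compact K is covered by finitely
  many right translates L k, k in F.  Let x lie in the strong boundary of LA with respect to K,
  say x = k1^-1 l a = k2^-1 c with c not in LA, and write k2 = v k with v in L, k in F.  Then
  k x = v^-1 k2 k1^-1 l a lies in N A for N = L K K^-1 L, but not in A, as otherwise
  c = v (k x) would lie in LA.  So the strong boundary of LA is covered by the left translates
  k^-1 (N A - A), k in F, and by left invariance its measure is at most |F| times the measure
  of the Foelner boundary of A with respect to N.  As A is contained in LA, the strong Foelner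
  ratio of LA is at most |F| times the Foelner ratio of A.
  Amenability, local compactness and directedness of the index set are not needed.\<close>

lemma left_translate_eq_vimage: "(+) (c::'g::group_add) ` U = (+) (- c) -` U"
  by (force simp: add.assoc[symmetric] image_iff)

lemma right_translate_eq_vimage: "(\<lambda>y. y + (c::'g::group_add)) ` U = (\<lambda>y. y + - c) -` U"
  by (force simp: add.assoc image_iff)

lemma open_left_translate: "open U \<Longrightarrow> open ((+) (c::'g::topological_group_add) ` U)"
  unfolding left_translate_eq_vimage by (rule open_vimage) (auto intro!: continuous_intros)

lemma open_right_translate: "open U \<Longrightarrow> open ((\<lambda>y. y + (c::'g::topological_group_add)) ` U)"
  unfolding right_translate_eq_vimage by (rule open_vimage) (auto intro!: continuous_intros)

lemma set_prod_eq_UN_left_translates: "set_prod K A = (\<Union>k\<in>K. (+) k ` A)"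
  unfolding set_prod_def by auto

lemma subset_set_prod: "(0::'g::group_add) \<in> L \<Longrightarrow> A \<subseteq> set_prod L A"
  unfolding set_prod_def by force

lemma open_set_prod: "open A \<Longrightarrow> open (set_prod K (A::'g::topological_group_add set))"
  unfolding set_prod_eq_UN_left_translates by (auto intro: open_left_translate)

lemma compact_set_prod:
  assumes "compact K" "compact (A::'g::topological_group_add set)"
  shows "compact (set_prod K A)"
proof -
  have "set_prod K A = (\<lambda>p. fst p + snd p) ` (K \<times> A)"
    unfolding set_prod_def by force
  also have "compact \<dots>"
    by (intro compact_continuous_image continuous_intros compact_Times assms)
  finally show ?thesis .
qed

lemma compact_set_inv: "compact K \<Longrightarrow> compact (set_inv (K::'g::topological_group_add set))"
  unfolding set_inv_def by (intro compact_continuous_image continuous_intros)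

lemma cK_set_prod: "K \<in> cK \<Longrightarrow> A \<in> cK \<Longrightarrow> set_prod K (A::'g::topological_group_add set) \<in> cK"
  unfolding cK_def by (auto simp: compact_set_prod) (auto simp: set_prod_def)

lemma cK_set_inv: "K \<in> cK \<Longrightarrow> set_inv (K::'g::topological_group_add set) \<in> cK"
  unfolding cK_def by (auto simp: compact_set_inv) (auto simp: set_inv_def)

lemma finite_right_translates_cover:
  fixes K L :: "'g::topological_group_add set"
  assumes "compact K" and "0 \<in> interior L"
  obtains F where "finite F" and "K \<subseteq> (\<Union>k\<in>F. (\<lambda>v. v + k) ` L)"
proof -
  have "K \<subseteq> (\<Union>k\<in>K. (\<lambda>v. v + k) ` interior L)"
    using assms(2) by force
  then obtain F where "finite F" and cover: "K \<subseteq> (\<Union>k\<in>F. (\<lambda>v. v + k) ` interior L)"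
    using compactE_image[OF assms(1)] open_right_translate open_interior by metis
  have "(\<Union>k\<in>F. (\<lambda>v. v + k) ` interior L) \<subseteq> (\<Union>k\<in>F. (\<lambda>v. v + k) ` L)"
    by (intro UN_mono image_mono interior_subset order.refl)
  with cover have "K \<subseteq> (\<Union>k\<in>F. (\<lambda>v. v + k) ` L)"
    by (rule order.trans)
  with \<open>finite F\<close> show thesis
    by (rule that)
qed

lemma strong_folner_boundary_set_prod_subset:
  fixes K L A :: "'g::group_add set"
  assumes cover: "K \<subseteq> (\<Union>k\<in>F. (\<lambda>v. v + k) ` L)" and symm: "set_inv L = L"
  shows "strong_folner_boundary K (set_prod L A) \<subseteq>
    (\<Union>k\<in>F. (+) (- k) ` (set_prod (set_prod L (set_prod K (set_prod (set_inv K) L))) A - A))"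
    (is "_ \<subseteq> (\<Union>k\<in>F. (+) (- k) ` (set_prod ?N A - A))")
proof
  fix x assume "x \<in> strong_folner_boundary K (set_prod L A)"
  then obtain k\<^sub>1 l a k\<^sub>2 c where "k\<^sub>1 \<in> K" "l \<in> L" "a \<in> A" "x = - k\<^sub>1 + (l + a)"
    and "k\<^sub>2 \<in> K" "c \<notin> set_prod L A" "x = - k\<^sub>2 + c"
    unfolding strong_folner_boundary_def set_prod_def set_inv_def by blast
  from cover \<open>k\<^sub>2 \<in> K\<close> obtain k v where "k \<in> F" "v \<in> L" "k\<^sub>2 = v + k"
    by blast
  have "- v \<in> L"
    using \<open>v \<in> L\<close> symm unfolding set_inv_def by blast
  have "k = - v + k\<^sub>2"
    using \<open>k\<^sub>2 = v + k\<close> by (simp add: add.assoc[symmetric])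
  then have kx: "k + x = - v + (k\<^sub>2 + (- k\<^sub>1 + l)) + a"
    using \<open>x = - k\<^sub>1 + (l + a)\<close> by (simp only: add.assoc)
  have "k + x \<in> set_prod ?N A"
    unfolding kx set_prod_def set_inv_def
    using \<open>- v \<in> L\<close> \<open>k\<^sub>2 \<in> K\<close> \<open>k\<^sub>1 \<in> K\<close> \<open>l \<in> L\<close> \<open>a \<in> A\<close> by blast
  moreover have "k + x \<notin> A"
  proof
    assume "k + x \<in> A"
    then have "v + (k + x) \<in> set_prod L A"
      using \<open>v \<in> L\<close> unfolding set_prod_def by blast
    also have "v + (k + x) = c"
      unfolding \<open>x = - k\<^sub>2 + c\<close> add.assoc[symmetric] \<open>k\<^sub>2 = v + k\<close>[symmetric] by simp
    finally show False
      using \<open>c \<notin> set_prod L A\<close> by blast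
  qed
  ultimately show "x \<in> (\<Union>k\<in>F. (+) (- k) ` (set_prod ?N A - A))"
    using \<open>k \<in> F\<close> by (intro UN_I image_eqI[where x = "k + x"]) (auto simp: add.assoc[symmetric])
qed

lemma left_haar_measure_sets_eq: "left_haar_measure m \<Longrightarrow> sets m = sets borel"
  by (simp add: left_haar_measure_def)

lemma sets_left_translate:
  fixes m :: "'g::topological_group_add measure"
  assumes "left_haar_measure m" and "S \<in> sets m"
  shows "(+) c ` S \<in> sets m"
proof -
  have "(+) (- c) \<in> borel_measurable (borel :: 'g measure)"
    by (intro borel_measurable_continuous_onI continuous_intros)
  from measurable_sets[OF this] show ?thesis
    using assms unfolding left_translate_eq_vimage by (simp add: left_haar_measure_sets_eq)
qed

lemma emeasure_left_translate:
  "left_haar_measure m \<Longrightarrow> S \<in> sets m \<Longrightarrow> emeasure m ((+) c ` S) = emeasure m S"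
  unfolding left_haar_measure_def by simp

lemma measure_left_translate:
  "left_haar_measure m \<Longrightarrow> S \<in> sets m \<Longrightarrow> measure m ((+) c ` S) = measure m S"
  by (simp add: measure_def emeasure_left_translate)

lemma fmeasurable_left_translate:
  "left_haar_measure m \<Longrightarrow> S \<in> fmeasurable m \<Longrightarrow> (+) c ` S \<in> fmeasurable m"
  by (simp add: fmeasurable_def sets_left_translate emeasure_left_translate)

lemma fmeasurable_compact:
  fixes m :: "'g::{topological_group_add, t2_space} measure"
  assumes "left_haar_measure m" and "compact S"
  shows "S \<in> fmeasurable m"
  using assms by (intro fmeasurableI)
    (auto simp: left_haar_measure_def intro: borel_closed compact_imp_closed)

lemma measure_pos_cKp:
  "left_haar_measure m \<Longrightarrow> A \<in> cKp m \<Longrightarrow> 0 < measure m A"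
  unfolding cKp_def left_haar_measure_def by (auto simp: measure_def enn2real_positive_iff)

lemma set_prod_cKp:
  fixes m :: "'g::{topological_group_add, t2_space} measure"
  assumes haar: "left_haar_measure m" and "compact L" and "0 \<in> L" and A: "A \<in> cKp m"
  shows "set_prod L A \<in> cKp m"
proof -
  have LA: "compact (set_prod L A)"
    using assms(2) A unfolding cKp_def by (simp add: compact_set_prod)
  have "emeasure m A \<le> emeasure m (set_prod L A)"
    using subset_set_prod[OF assms(3)] fmeasurable_compact[OF haar LA]
    by (intro emeasure_mono fmeasurableD)
  with LA A show ?thesis
    unfolding cKp_def by auto
qed

lemma fmeasurable_folner_boundary:
  fixes m :: "'g::{topological_group_add, t2_space} measure"
  assumes haar: "left_haar_measure m" and "compact K" and "compact A"
  shows "folner_boundary K A \<in> fmeasurable m"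
proof -
  have "set_prod K A \<in> fmeasurable m" and "A \<in> fmeasurable m"
    using assms by (simp_all add: fmeasurable_compact compact_set_prod)
  then show ?thesis
    unfolding folner_boundary_def by (simp add: fmeasurable.Un fmeasurable_Diff fmeasurableD)
qed

lemma sets_strong_folner_boundary:
  fixes m :: "'g::{topological_group_add, t2_space} measure"
  assumes "left_haar_measure m" and "compact K" and "compact A"
  shows "strong_folner_boundary K A \<in> sets m"
proof -
  have "compact (set_prod (set_inv K) A)"
    using assms by (intro compact_set_prod compact_set_inv)
  moreover have "open (set_prod (set_inv K) (UNIV - A))"
    using assms by (intro open_set_prod open_Diff open_UNIV compact_imp_closed)
  ultimately show ?thesis
    unfolding strong_folner_boundary_def left_haar_measure_sets_eq[OF assms(1)]
    by (intro sets.Int borel_open borel_closed compact_imp_closed)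
qed

lemma measure_strong_folner_boundary_set_prod_le:
  fixes m :: "'g::{topological_group_add, t2_space} measure"
  assumes haar: "left_haar_measure m" and "compact K" and "compact L" and "compact A"
    and "set_inv L = L" and "finite F" and "K \<subseteq> (\<Union>k\<in>F. (\<lambda>v. v + k) ` L)"
  defines "N \<equiv> set_prod L (set_prod K (set_prod (set_inv K) L))"
  shows "measure m (strong_folner_boundary K (set_prod L A))
    \<le> real (card F) * measure m (folner_boundary N A)"
proof -
  define D where "D = set_prod N A - A"
  have "compact N"
    unfolding N_def using assms by (intro compact_set_prod compact_set_inv)
  then have D: "D \<in> fmeasurable m"
    unfolding D_def using assms
    by (simp add: fmeasurable_Diff fmeasurableD fmeasurable_compact compact_set_prod)
  have "strong_folner_boundary K (set_prod L A) \<subseteq> (\<Union>k\<in>F. (+) (- k) ` D)"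
    using strong_folner_boundary_set_prod_subset[OF assms(7,5)] unfolding D_def N_def .
  then have "measure m (strong_folner_boundary K (set_prod L A)) \<le> measure m (\<Union>k\<in>F. (+) (- k) ` D)"
    using assms(2-4,6) D
    by (intro measure_mono_fmeasurable sets_strong_folner_boundary[OF haar] compact_set_prod
        fmeasurable.finite_UN fmeasurable_left_translate[OF haar])
  also have "\<dots> \<le> (\<Sum>k\<in>F. measure m ((+) (- k) ` D))"
    using assms D by (intro measure_UNION_le fmeasurableD fmeasurable_left_translate)
  also have "\<dots> = real (card F) * measure m D"
    using haar D by (simp add: measure_left_translate fmeasurableD)
  also have "\<dots> \<le> real (card F) * measure m (folner_boundary N A)"
    using haar \<open>compact N\<close> assms(4) D
    by (intro mult_left_mono measure_mono_fmeasurable fmeasurable_folner_boundary)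
      (auto simp: D_def folner_boundary_def fmeasurableD)
  finally show ?thesis .
qed

lemma strong_folner_ratio_set_prod_le:
  fixes m :: "'g::{topological_group_add, t2_space} measure"
  assumes haar: "left_haar_measure m" and "compact K" and "compact L" and "0 \<in> L"
    and "set_inv L = L" and A: "A \<in> cKp m"
    and "finite F" and "K \<subseteq> (\<Union>k\<in>F. (\<lambda>v. v + k) ` L)"
  defines "N \<equiv> set_prod L (set_prod K (set_prod (set_inv K) L))"
  shows "measure m (strong_folner_boundary K (set_prod L A)) / measure m (set_prod L A)
    \<le> real (card F) * (measure m (folner_boundary N A) / measure m A)"
proof -
  have "compact A" and "0 < measure m A"
    using A measure_pos_cKp[OF haar A] unfolding cKp_def by auto
  moreover have "measure m A \<le> measure m (set_prod L A)"
    using assms \<open>compact A\<close>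
    by (intro measure_mono_fmeasurable subset_set_prod fmeasurableD fmeasurable_compact
        compact_set_prod)
  ultimately have "measure m (strong_folner_boundary K (set_prod L A)) / measure m (set_prod L A)
      \<le> measure m (strong_folner_boundary K (set_prod L A)) / measure m A"
    by (intro divide_left_mono) auto
  also have "\<dots> \<le> real (card F) * measure m (folner_boundary N A) / measure m A"
    unfolding N_def using assms \<open>compact A\<close> \<open>0 < measure m A\<close>
    by (intro divide_right_mono measure_strong_folner_boundary_set_prod_le) auto
  finally show ?thesis
    by simp
qed

lemma tendsto_strong_folner_ratio_set_prod:
  fixes m :: "'g::{topological_group_add, t2_space} measure"
  assumes haar: "left_haar_measure m" and folner: "folner_net m le A"
    and "compact L" and "set_inv L = L" and "0 \<in> interior L" and K: "K \<in> cK"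
  shows "((\<lambda>i. measure m (strong_folner_boundary K (set_prod L (A i)))
    / measure m (set_prod L (A i))) \<longlongrightarrow> 0) (net_filter le)"
proof -
  have "0 \<in> L"
    using assms(5) interior_subset by blast
  obtain F where "finite F" and cover: "K \<subseteq> (\<Union>k\<in>F. (\<lambda>v. v + k) ` L)"
    using K assms(5) finite_right_translates_cover unfolding cK_def by blast
  define N where "N = set_prod L (set_prod K (set_prod (set_inv K) L))"
  have "L \<in> cK"
    using assms(3) \<open>0 \<in> L\<close> unfolding cK_def by blast
  with K have "N \<in> cK"
    unfolding N_def by (intro cK_set_prod cK_set_inv)
  then have "((\<lambda>i. measure m (folner_boundary N (A i)) / measure m (A i)) \<longlongrightarrow> 0) (net_filter le)"
    using folner unfolding folner_net_def by blast
  then have lim: "((\<lambda>i. real (card F) * (measure m (folner_boundary N (A i)) / measure m (A i)))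
      \<longlongrightarrow> 0) (net_filter le)"
    by (rule tendsto_mult_right_zero)
  have "A i \<in> cKp m" for i
    using folner unfolding folner_net_def by blast
  then have bound: "measure m (strong_folner_boundary K (set_prod L (A i)))
      / measure m (set_prod L (A i))
      \<le> real (card F) * (measure m (folner_boundary N (A i)) / measure m (A i))" for i
    unfolding N_def using K unfolding cK_def
    by (intro strong_folner_ratio_set_prod_le haar assms(3,4) \<open>0 \<in> L\<close> \<open>finite F\<close> cover) blast+
  show ?thesis
    by (rule tendsto_sandwich[OF _ _ tendsto_const lim])
      (intro always_eventually allI divide_nonneg_nonneg measure_nonneg bound)+
qed

theorem proposition5p9:
  fixes m :: "'g::{topological_group_add, t2_space} measure"
    and le :: "'i \<Rightarrow> 'i \<Rightarrow> bool"
    and A :: "'i \<Rightarrow> 'g set"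
    and L :: "'g set"
  assumes "locally_compact_space (euclidean :: 'g topology)"
    and "left_haar_measure m"
    and "amenable m"
    and "directed_poset le"
    and "folner_net m le A"
    and "compact L" and "set_inv L = L" and "0 \<in> interior L"
  shows "strong_folner_net m le (\<lambda>i. set_prod L (A i))"
  unfolding strong_folner_net_def
proof (intro conjI allI ballI)
  have "0 \<in> L"
    using assms(8) interior_subset by blast
  show "set_prod L (A i) \<in> cKp m" for i
    using assms(5) unfolding folner_net_def
    by (intro set_prod_cKp assms(2,6) \<open>0 \<in> L\<close>) blast
  show "((\<lambda>i. measure m (strong_folner_boundary K (set_prod L (A i)))
      / measure m (set_prod L (A i))) \<longlongrightarrow> 0) (net_filter le)" if "K \<in> cK" for K
    using assms(2,5-8) that by (rule tendsto_strong_folner_ratio_set_prod)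
qed

end
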